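(* Assume $\eta$ is supported on $\{\mathbf{x}\in E:|\mathbf{x}|_\infty\le R\}$ for some $R>0$. Let $\rho$ be a Borel probability measure on $\mathsf{X}$ and let $Y$ be a discrete-time Markov process on $\mathsf{X}$ with transition kernel $\mu$ and $Y_0\sim\rho$. Let $k$ be a nonnegative integer. Then $g(Y_{k+1})\le g(Y_k)+R$ almost surely, and consequently $g(Y_k)\le g(Y_0)+kR$ almost surely.
   Context: Fix $\theta_a,\theta_d>0$, positive integers $n,N$, $E=\mathbb{R}^N$ with the $\infty$-norm $|\cdot|_\infty$, and a Borel probability measure $\eta$ on $E$ with finite mean. $[k]=\{0,\dots,k-1\}$; $|\psi|=\sum_{i\in[n]}\psi(i)$. State space: $\mathsf{X}=\{(\psi,\mathbf{v})\in\{0,1\}^{[n]}\times E^{[n+1]}:\sum_{i\in[n]}\psi(i)(\mathbf{v}(i)-\mathbf{v}(n))=0\}$ (subspace of the product topology, discrete on $\{0,1\}$, Euclidean on $E$). For $i\in[n]$: $r_i(\psi)=\frac{\theta_d\psi(i)+\theta_a(1-\psi(i))}{\theta_d|\psi|+\theta_a(n-|\psi|)}$; $s_i(\psi)$ agrees with $\psi$ except $s_i(\psi)(i)=1-\psi(i)$. For $\mathsf{x}=(\psi,\mathbf{v})\in\mathsf{X}$, $\lambda_i^{\mathsf{x}}$ is the law of $(s_i(\psi),\mathbf{w})$ with $\mathbf{w}(j)=\mathbf{v}(j)$ for $j\in[n]\setminus\{i\}$ and $(\mathbf{w}(i),\mathbf{w}(n))$ equal to $(\mathbf{v}(i),\mathbf{v}(n))$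 if $|\psi|=\psi(i)=1$; $(\mathbf{v}(i),\mathbf{v}(n)-\frac{\mathbf{v}(i)-\mathbf{v}(n)}{|\psi|-1})$ if $|\psi|>\psi(i)=1$; $(\mathbf{x}+\mathbf{v}(n),\frac{\mathbf{x}}{|\psi|+1}+\mathbf{v}(n))$ with $\mathbf{x}\sim\eta$ if $\psi(i)=0$. $\mu(\mathsf{x},B)=\sum_{i\in[n]}r_i(\psi)\lambda_i^{\mathsf{x}}(B)$. $f_i(\psi,\mathbf{v})=\mathbf{v}(i)$ for $i\in[n+1]$, and $g(\mathsf{x})=\max\{|f_i(\mathsf{x})|_\infty:i\in[n+1]\}$. *)

theory Defs
  imports "HOL-Probability.Probability"
begin

text \<open>States: pairs (psi, v) with psi : [n] -> {0,1} (nat-valued, extensional on {..<n})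
  and v : [n+1] -> E (extensional on {..n}), E = real^'N with the infinity norm (infnorm).\<close>

definition Psi :: "nat \<Rightarrow> (nat \<Rightarrow> nat) set" where
  "Psi n = {..<n} \<rightarrow>\<^sub>E {0, 1}"

definition psize :: "nat \<Rightarrow> (nat \<Rightarrow> nat) \<Rightarrow> nat" where
  "psize n \<psi> = (\<Sum>i<n. \<psi> i)"

definition Xset :: "nat \<Rightarrow> ((nat \<Rightarrow> nat) \<times> (nat \<Rightarrow> real^'N)) set" where
  "Xset n = {(\<psi>, v). \<psi> \<in> Psi n \<and> v \<in> {..n} \<rightarrow>\<^sub>E UNIV \<and>
                     (\<Sum>i<n. real (\<psi> i) *\<^sub>R (v i - v n)) = 0}"

definition SX :: "nat \<Rightarrow> ((nat \<Rightarrow> nat) \<times> (nat \<Rightarrow> real^'N)) measure" where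
  "SX n = restrict_space (count_space (Psi n) \<Otimes>\<^sub>M (\<Pi>\<^sub>M i\<in>{..n}. (borel :: (real^'N) measure))) (Xset n)"

definition rate :: "real \<Rightarrow> real \<Rightarrow> nat \<Rightarrow> (nat \<Rightarrow> nat) \<Rightarrow> nat \<Rightarrow> real" where
  "rate \<theta>a \<theta>d n \<psi> i =
     (\<theta>d * real (\<psi> i) + \<theta>a * (1 - real (\<psi> i))) /
     (\<theta>d * real (psize n \<psi>) + \<theta>a * (real n - real (psize n \<psi>)))"

definition flip :: "nat \<Rightarrow> (nat \<Rightarrow> nat) \<Rightarrow> (nat \<Rightarrow> nat)" where
  "flip i \<psi> = \<psi>(i := 1 - \<psi> i)"

definition step :: "nat \<Rightarrow> nat \<Rightarrow> (nat \<Rightarrow> nat) \<times> (nat \<Rightarrow> real^'N) \<Rightarrow> real^'N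
                     \<Rightarrow> (nat \<Rightarrow> nat) \<times> (nat \<Rightarrow> real^'N)" where
  "step n i st x = (let \<psi> = fst st; v = snd st; s = psize n \<psi> in
     (flip i \<psi>,
      (if \<psi> i = 1 \<and> s = 1 then v
       else if \<psi> i = 1 \<and> s > 1 then
         v(n := v n - (1 / (real s - 1)) *\<^sub>R (v i - v n))
       else v(i := x + v n, n := (1 / (real s + 1)) *\<^sub>R x + v n))))"

text \<open>Transition kernel mu(x, B) = sum_i r_i(psi) lambda_i^x(B), where lambda_i^x is the
  law of step n i x under eta.\<close>
definition kernel :: "real \<Rightarrow> real \<Rightarrow> (real^'N) measure \<Rightarrow> nat
     \<Rightarrow> (nat \<Rightarrow> nat) \<times> (nat \<Rightarrow> real^'N) \<Rightarrow> ((nat \<Rightarrow> nat) \<times> (nat \<Rightarrow> real^'N)) set \<Rightarrow> real" where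
  "kernel \<theta>a \<theta>d \<eta> n st B =
     (\<Sum>i<n. rate \<theta>a \<theta>d n (fst st) i * measure \<eta> {x \<in> space \<eta>. step n i st x \<in> B})"

definition gmax :: "nat \<Rightarrow> (nat \<Rightarrow> nat) \<times> (nat \<Rightarrow> real^'N) \<Rightarrow> real" where
  "gmax n st = Max ((\<lambda>i. infnorm (snd st i)) ` {..n})"

definition markov_process ::
  "'w measure \<Rightarrow> 's measure \<Rightarrow> ('s \<Rightarrow> 's set \<Rightarrow> real) \<Rightarrow> 's measure \<Rightarrow> (nat \<Rightarrow> 'w \<Rightarrow> 's) \<Rightarrow> bool" where
  "markov_process M S K \<rho> Y \<longleftrightarrow>
     prob_space M \<and> (\<forall>k. Y k \<in> M \<rightarrow>\<^sub>M S) \<and> distr M S (Y 0) = \<rho> \<and>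
     (\<forall>k. \<forall>A \<in> sets (\<Pi>\<^sub>M i\<in>{..k}. S). \<forall>B \<in> sets S.
        measure M {\<omega> \<in> space M. (\<lambda>i\<in>{..k}. Y i \<omega>) \<in> A \<and> Y (Suc k) \<omega> \<in> B} =
        (LINT \<omega>:{\<omega> \<in> space M. (\<lambda>i\<in>{..k}. Y i \<omega>) \<in> A}|M. K (Y k \<omega>) B))"

end

theory Submission imports Defs begin

text \<open>Consider one transition and a draw \<open>x\<close> with \<open>|x|\<^sub>\<infinity> \<le> R\<close>. If an inactive coordinate is
  activated, the two changed vectors are \<open>v n\<close> plus \<open>x\<close> or \<open>x/(|\<psi>|+1)\<close>, so their norms grow
  by at most \<open>R\<close>. If an active coordinate \<open>i\<close> is deactivated, the constraint
  \<open>\<Sum>\<^sub>j \<psi> j (v j - v n) = 0\<close> shows that the new centre \<open>v n - (v i - v n)/(|\<psi>| - 1)\<close> is the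
  average of the remaining active \<open>v j\<close>, so its norm is at most \<open>g\<close>. Hence every
  transition allowed by the kernel raises \<open>g\<close> by at most \<open>R\<close>, except on an \<open>\<eta>\<close>-null set of
  draws; the Markov property turns this into an almost sure bound, and the bound after
  \<open>k\<close> steps follows by summing the increments.\<close>

lemma infnorm_sum_le:
  fixes f :: "'b \<Rightarrow> 'a::euclidean_space"
  shows "infnorm (\<Sum>j\<in>S. f j) \<le> (\<Sum>j\<in>S. infnorm (f j))"
  by (induction S rule: infinite_finite_induct)
     (auto simp: infnorm_0 intro: order_trans[OF infnorm_triangle])

lemma infnorm_weighted_average_le:
  fixes v :: "'b \<Rightarrow> 'a::euclidean_space"
  assumes "finite T" and "\<And>j. j \<in> T \<Longrightarrow> w j \<ge> 0"
    and "\<And>j. j \<in> T \<Longrightarrow> infnorm (v j) \<le> G" and W: "(\<Sum>j\<in>T. w j) > 0"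
  shows "infnorm ((1 / (\<Sum>j\<in>T. w j)) *\<^sub>R (\<Sum>j\<in>T. w j *\<^sub>R v j)) \<le> G"
proof -
  let ?W = "\<Sum>j\<in>T. w j"
  have "infnorm (\<Sum>j\<in>T. w j *\<^sub>R v j) \<le> (\<Sum>j\<in>T. infnorm (w j *\<^sub>R v j))"
    by (rule infnorm_sum_le)
  also have "\<dots> \<le> (\<Sum>j\<in>T. w j * G)"
    using assms(2,3) by (intro sum_mono) (simp add: infnorm_mul mult_left_mono)
  also have "\<dots> = ?W * G"
    by (simp add: sum_distrib_right)
  finally have "infnorm (\<Sum>j\<in>T. w j *\<^sub>R v j) / ?W \<le> G"
    using W by (simp add: divide_le_eq mult.commute)
  then show ?thesis
    using W by (simp add: infnorm_mul)
qed

lemma infnorm_le_gmax: "j \<le> n \<Longrightarrow> infnorm (snd st j) \<le> gmax n st"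
  unfolding gmax_def by (rule Max_ge) auto

lemma gmax_leI: "(\<And>j. j \<le> n \<Longrightarrow> infnorm (snd st j) \<le> c) \<Longrightarrow> gmax n st \<le> c"
  unfolding gmax_def by (subst Max_le_iff) auto

lemma psize_remove:
  assumes "i < n" and "\<psi> i = 1"
  shows "(\<Sum>j\<in>{..<n} - {i}. real (\<psi> j)) = real (psize n \<psi>) - 1"
proof -
  have "psize n \<psi> = \<psi> i + (\<Sum>j\<in>{..<n} - {i}. \<psi> j)"
    unfolding psize_def using assms(1) by (simp add: sum.remove)
  then show ?thesis
    using assms(2) by simp
qed

lemma Xset_centre_removal_eq:
  assumes X: "(\<psi>, v) \<in> Xset n" and i: "i < n" and "\<psi> i = 1" and s: "psize n \<psi> > 1"
  defines "T \<equiv> {..<n} - {i}"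
  shows "v n - (1 / (real (psize n \<psi>) - 1)) *\<^sub>R (v i - v n)
       = (1 / (\<Sum>j\<in>T. real (\<psi> j))) *\<^sub>R (\<Sum>j\<in>T. real (\<psi> j) *\<^sub>R v j)"
proof -
  let ?s = "real (psize n \<psi>)"
  have weights: "(\<Sum>j\<in>T. real (\<psi> j)) = ?s - 1"
    unfolding T_def by (rule psize_remove) fact+
  have "(\<Sum>j<n. real (\<psi> j) *\<^sub>R (v j - v n)) = 0"
    using X by (simp add: Xset_def)
  then have "(v i - v n) + (\<Sum>j\<in>T. real (\<psi> j) *\<^sub>R (v j - v n)) = 0"
    using i \<open>\<psi> i = 1\<close> by (simp add: T_def sum.remove)
  then have constraint: "(\<Sum>j\<in>T. real (\<psi> j) *\<^sub>R (v j - v n)) = - (v i - v n)"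
    by (metis add.commute eq_neg_iff_add_eq_0)
  have "(\<Sum>j\<in>T. real (\<psi> j) *\<^sub>R v j)
      = (\<Sum>j\<in>T. real (\<psi> j) *\<^sub>R (v j - v n)) + (\<Sum>j\<in>T. real (\<psi> j)) *\<^sub>R v n"
    by (simp add: scaleR_diff_right sum.distrib[symmetric] scaleR_sum_left)
  also have "\<dots> = (?s - 1) *\<^sub>R v n - (v i - v n)"
    using constraint weights by simp
  finally show ?thesis
    using s by (simp add: weights scaleR_diff_right)
qed

lemma gmax_centre_removal_le:
  assumes X: "(\<psi>, v) \<in> Xset n" and i: "i < n" and "\<psi> i = 1" and s: "psize n \<psi> > 1"
  shows "infnorm (v n - (1 / (real (psize n \<psi>) - 1)) *\<^sub>R (v i - v n)) \<le> gmax n (\<psi>, v)"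
proof -
  have "\<psi> j \<in> {0, 1}" if "j < n" for j
    using X that by (auto simp: Xset_def Psi_def)
  then have nonneg: "real (\<psi> j) \<ge> 0" for j
    by simp
  have "(\<Sum>j\<in>{..<n} - {i}. real (\<psi> j)) > 0"
    using psize_remove[of i n \<psi>] i \<open>\<psi> i = 1\<close> s by simp
  then show ?thesis
    unfolding Xset_centre_removal_eq[OF assms]
    using infnorm_le_gmax[of _ n "(\<psi>, v)"]
    by (intro infnorm_weighted_average_le nonneg) auto
qed

lemma gmax_step_le:
  assumes X: "st \<in> Xset n" and i: "i < n" and x: "infnorm x \<le> R" and R: "R \<ge> 0"
  shows "gmax n (step n i st x) \<le> gmax n st + R"
proof -
  obtain \<psi> v where st: "st = (\<psi>, v)"
    by (cases st)
  let ?s = "psize n \<psi>"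
  let ?G = "gmax n st"
  have vG: "infnorm (v j) \<le> ?G" if "j \<le> n" for j
    using infnorm_le_gmax[OF that, of st] by (simp add: st)
  then have vGR: "infnorm (v j) \<le> ?G + R" if "j \<le> n" for j
    using R that by fastforce
  consider "\<psi> i = 1 \<and> ?s = 1" | "\<psi> i = 1 \<and> ?s > 1" | "\<not> (\<psi> i = 1 \<and> ?s \<ge> 1)"
    by linarith
  then show ?thesis
  proof cases
    case 1
    then have "gmax n (step n i st x) = ?G"
      by (simp add: step_def st Let_def gmax_def)
    then show ?thesis
      using R by simp
  next
    case 2
    let ?w = "v n - (1 / (real ?s - 1)) *\<^sub>R (v i - v n)"
    have "infnorm ?w \<le> ?G"
      using gmax_centre_removal_le[OF X[unfolded st] i] 2 by (simp add: st)
    moreover have "step n i st x = (flip i \<psi>, v(n := ?w))"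
      using 2 by (simp add: step_def st Let_def)
    ultimately show ?thesis
      using vGR R by (auto intro!: gmax_leI)
  next
    case 3
    let ?w1 = "x + v n" and ?w2 = "(1 / (real ?s + 1)) *\<^sub>R x + v n"
    have "infnorm ?w1 \<le> ?G + R"
      using infnorm_triangle[of x "v n"] vG[of n] x by simp
    moreover have "infnorm ((1 / (real ?s + 1)) *\<^sub>R x) \<le> infnorm x"
      unfolding infnorm_mul by (rule mult_left_le_one_le) (simp_all add: infnorm_pos_le)
    then have "infnorm ((1 / (real ?s + 1)) *\<^sub>R x) \<le> R"
      using x by linarith
    then have "infnorm ?w2 \<le> ?G + R"
      using infnorm_triangle[of "(1 / (real ?s + 1)) *\<^sub>R x" "v n"] vG[of n] by simp
    moreover have "step n i st x = (flip i \<psi>, v(i := ?w1, n := ?w2))"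
      using 3 by (auto simp: step_def st Let_def)
    ultimately show ?thesis
      using vGR by (auto intro!: gmax_leI)
  qed
qed

lemma gmax_measurable[measurable]: "gmax n \<in> borel_measurable (SX n)"
  unfolding SX_def gmax_def
  by (intro measurable_restrict_space1 borel_measurable_Max finite_atMost
      measurable_compose[OF _ borel_measurable_continuous_onI[OF continuous_on_infnorm[OF continuous_on_id]]]
      measurable_compose[OF measurable_snd measurable_component_singleton])
    simp

lemma space_SX_subset: "space (SX n) \<subseteq> Xset n"
  by (simp add: SX_def space_restrict_space)

lemma measure_eq_0_if_AE_not:
  assumes "AE x in M. \<not> P x"
  shows "measure M {x \<in> space M. P x} = 0"
proof (cases "{x \<in> space M. P x} \<in> sets M")
  case True
  with assms have "{x \<in> space M. P x} \<in> null_sets M"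
    by (subst (asm) AE_iff_null) auto
  then show ?thesis
    by (rule measure_eq_0_null_sets)
qed (rule measure_notin_sets)

lemma kernel_gmax_exceeds_eq_0:
  assumes "st \<in> Xset n" and "gmax n st \<le> c" and "R \<ge> 0" and "AE x in \<eta>. infnorm x \<le> R"
  shows "kernel \<theta>a \<theta>d \<eta> n st {y \<in> space (SX n). c + R < gmax n y} = 0"
proof -
  have "measure \<eta> {x \<in> space \<eta>. step n i st x \<in> {y \<in> space (SX n). c + R < gmax n y}} = 0"
    if "i < n" for i
  proof (rule measure_eq_0_if_AE_not)
    show "AE x in \<eta>. step n i st x \<notin> {y \<in> space (SX n). c + R < gmax n y}"
      using assms(4)
    proof eventually_elim
      case (elim x)
      then have "gmax n (step n i st x) \<le> c + R"
        using gmax_step_le[OF assms(1) that elim assms(3)] assms(2) by linarith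
      then show ?case
        by auto
    qed
  qed
  then show ?thesis
    unfolding kernel_def by simp
qed

lemma markov_process_AE_not_step:
  fixes f :: "'s \<Rightarrow> real"
  assumes mp: "markov_process M S K \<rho> Y" and [measurable]: "f \<in> borel_measurable S"
    and B[measurable]: "B \<in> sets S" and null: "\<And>st. st \<in> space S \<Longrightarrow> f st \<le> c \<Longrightarrow> K st B = 0"
  shows "AE \<omega> in M. f (Y k \<omega>) \<le> c \<longrightarrow> Y (Suc k) \<omega> \<notin> B"
proof -
  have P: "prob_space M" and Y[measurable]: "\<And>j. Y j \<in> M \<rightarrow>\<^sub>M S"
    and markov: "\<And>A. A \<in> sets (\<Pi>\<^sub>M i\<in>{..k}. S) \<Longrightarrow>
        measure M {\<omega> \<in> space M. (\<lambda>i\<in>{..k}. Y i \<omega>) \<in> A \<and> Y (Suc k) \<omega> \<in> B} =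
        (LINT \<omega>:{\<omega> \<in> space M. (\<lambda>i\<in>{..k}. Y i \<omega>) \<in> A}|M. K (Y k \<omega>) B)"
    using mp B unfolding markov_process_def by auto
  interpret prob_space M by (rule P)
  define A where "A = {h \<in> space (\<Pi>\<^sub>M i\<in>{..k}. S). f (h k) \<le> c}"
  have A[measurable]: "A \<in> sets (\<Pi>\<^sub>M i\<in>{..k}. S)"
    unfolding A_def by measurable
  have path_in_A: "(\<lambda>i\<in>{..k}. Y i \<omega>) \<in> A \<longleftrightarrow> f (Y k \<omega>) \<le> c" if "\<omega> \<in> space M" for \<omega>
    using measurable_space[OF Y that] by (auto simp: A_def space_PiM)
  let ?E = "{\<omega> \<in> space M. (\<lambda>i\<in>{..k}. Y i \<omega>) \<in> A \<and> Y (Suc k) \<omega> \<in> B}"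
  have "measure M ?E = (LINT \<omega>:{\<omega> \<in> space M. (\<lambda>i\<in>{..k}. Y i \<omega>) \<in> A}|M. K (Y k \<omega>) B)"
    by (rule markov[OF A])
  also have "\<dots> = 0"
    unfolding set_lebesgue_integral_def
    using null measurable_space[OF Y] path_in_A
    by (subst Bochner_Integration.integral_cong[OF refl, where g = "\<lambda>_. 0"])
      (auto simp: indicator_def)
  finally have "?E \<in> null_sets M"
    by (intro null_setsI) (simp_all add: emeasure_eq_measure)
  then show ?thesis
    by (rule AE_I') (auto simp: path_in_A)
qed

text \<open>The Markov property only controls events with a fixed threshold, so the random
  threshold \<open>f (Y k \<omega>)\<close> is approximated from above by countably many rational ones.\<close>
lemma markov_process_AE_increment_le:
  fixes f :: "'s \<Rightarrow> real"
  assumes mp: "markov_process M S K \<rho> Y" and f[measurable]: "f \<in> borel_measurable S"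
    and null: "\<And>st c. st \<in> space S \<Longrightarrow> f st \<le> c \<Longrightarrow> K st {y \<in> space S. c + R < f y} = 0"
  shows "AE \<omega> in M. f (Y (Suc k) \<omega>) \<le> f (Y k \<omega>) + R"
proof -
  have Y: "Y j \<in> M \<rightarrow>\<^sub>M S" for j
    using mp by (simp add: markov_process_def)
  have "AE \<omega> in M. f (Y k \<omega>) \<le> real_of_rat q \<longrightarrow>
          Y (Suc k) \<omega> \<notin> {y \<in> space S. real_of_rat q + R < f y}" for q
  proof (rule markov_process_AE_not_step[OF mp f])
    show "{y \<in> space S. real_of_rat q + R < f y} \<in> sets S"
      by measurable
  qed (rule null)
  then have "AE \<omega> in M. \<forall>q. f (Y k \<omega>) \<le> real_of_rat q \<longrightarrow>
          Y (Suc k) \<omega> \<notin> {y \<in> space S. real_of_rat q + R < f y}"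
    by (simp only: AE_all_countable) blast
  with AE_space show ?thesis
  proof eventually_elim
    case (elim \<omega>)
    show ?case
    proof (rule ccontr)
      assume "\<not> ?case"
      then obtain r where "r \<in> \<rat>" "f (Y k \<omega>) < r" "r < f (Y (Suc k) \<omega>) - R"
        using Rats_dense_in_real[of "f (Y k \<omega>)" "f (Y (Suc k) \<omega>) - R"] by auto
      moreover from \<open>r \<in> \<rat>\<close> obtain q where "r = real_of_rat q"
        by (rule Rats_cases)
      ultimately show False
        using elim(2)[rule_format, of q] measurable_space[OF Y elim(1)] by simp
    qed
  qed
qed

lemma le_initial_plus_increments:
  fixes a :: "nat \<Rightarrow> real"
  assumes "\<And>j. a (Suc j) \<le> a j + R"
  shows "a k \<le> a 0 + real k * R"
proof (induction k)
  case (Suc k)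
  then show ?case
    using assms[of k] by (simp add: algebra_simps)
qed simp

theorem lemma3:
  fixes \<theta>a \<theta>d R :: real and n :: nat
    and \<eta> :: "(real^'N) measure"
    and \<rho> :: "((nat \<Rightarrow> nat) \<times> (nat \<Rightarrow> real^'N)) measure"
    and M :: "'w measure"
    and Y :: "nat \<Rightarrow> 'w \<Rightarrow> (nat \<Rightarrow> nat) \<times> (nat \<Rightarrow> real^'N)"
    and k :: nat
  assumes "\<theta>a > 0" and "\<theta>d > 0" and "n > 0"
    and "prob_space \<eta>" and "sets \<eta> = sets borel"
    and "integrable \<eta> (\<lambda>x. x)"
    and "R > 0" and "AE x in \<eta>. infnorm x \<le> R"
    and "prob_space \<rho>" and "sets \<rho> = sets (SX n)"
    and "markov_process M (SX n) (kernel \<theta>a \<theta>d \<eta> n) \<rho> Y"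
  shows "(AE \<omega> in M. gmax n (Y (Suc k) \<omega>) \<le> gmax n (Y k \<omega>) + R)
       \<and> (AE \<omega> in M. gmax n (Y k \<omega>) \<le> gmax n (Y 0 \<omega>) + real k * R)"
proof -
  have increment: "AE \<omega> in M. gmax n (Y (Suc j) \<omega>) \<le> gmax n (Y j \<omega>) + R" for j
  proof (rule markov_process_AE_increment_le[OF assms(11) gmax_measurable])
    fix st :: "(nat \<Rightarrow> nat) \<times> (nat \<Rightarrow> real^'N)" and c
    assume "st \<in> space (SX n)" and "gmax n st \<le> c"
    then show "kernel \<theta>a \<theta>d \<eta> n st {y \<in> space (SX n). c + R < gmax n y} = 0"
      using space_SX_subset assms(7,8) by (intro kernel_gmax_exceeds_eq_0) auto
  qed
  then have "AE \<omega> in M. \<forall>j. gmax n (Y (Suc j) \<omega>) \<le> gmax n (Y j \<omega>) + R"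
    by (simp add: AE_all_countable)
  then have "AE \<omega> in M. gmax n (Y k \<omega>) \<le> gmax n (Y 0 \<omega>) + real k * R"
    by eventually_elim (rule le_initial_plus_increments, blast)
  with increment show ?thesis
    by blast
qed

end
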